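(* Let $(B,\lfloor\cdot,\cdot\rfloor)$ be an SSD space with quadratic form $q$ and let $P\subset B$ be premaximally $q$-positive. Then either $\Phi_P(b)\ge q(b)$ for all $b\in B$, or $P^{\pi}=\operatorname{dom}\Phi_P$ and $P^{\pi}$ is an affine subset of $B$.
   Context: An SSD space is a pair $(B,\lfloor\cdot,\cdot\rfloor)$ with $B$ a nonzero real vector space and $\lfloor\cdot,\cdot\rfloor$ a symmetric bilinear form; $q(b)=\frac12\lfloor b,b\rfloor$. A nonempty $A\subset B$ is $q$-positive if $q(b-c)\ge0$ for all $b,c\in A$; maximally $q$-positive if $q$-positive and not properly contained in another $q$-positive set. $A^{\pi}:=\{b\in B: q(b-a)\ge0\ \forall a\in A\}$. $\Phi_A(x)=\sup_{a\in A}\{\lfloor x,a\rfloor-q(a)\}$ for nonempty $A$, and $\operatorname{dom}\Phi_A=\{x:\Phi_A(x)<+\infty\}$. A $q$-positive set $P$ is premaximally $q$-positive if there is a unique maximally $q$-positive set containing $P$. *)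

theory Defs
  imports "HOL-Analysis.Analysis"
begin

definition SSD_space :: "('b::real_vector \<Rightarrow> 'b \<Rightarrow> real) \<Rightarrow> bool" where
  "SSD_space s \<longleftrightarrow> (\<exists>b::'b. b \<noteq> 0) \<and> (\<forall>x. linear (s x)) \<and> (\<forall>y. linear (\<lambda>x. s x y))
     \<and> (\<forall>x y. s x y = s y x)"

definition qform :: "('b::real_vector \<Rightarrow> 'b \<Rightarrow> real) \<Rightarrow> 'b \<Rightarrow> real" where
  "qform s b = s b b / 2"

definition q_positive :: "('b::real_vector \<Rightarrow> 'b \<Rightarrow> real) \<Rightarrow> 'b set \<Rightarrow> bool" where
  "q_positive s A \<longleftrightarrow> A \<noteq> {} \<and> (\<forall>b\<in>A. \<forall>c\<in>A. qform s (b - c) \<ge> 0)"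

definition max_q_positive :: "('b::real_vector \<Rightarrow> 'b \<Rightarrow> real) \<Rightarrow> 'b set \<Rightarrow> bool" where
  "max_q_positive s A \<longleftrightarrow> q_positive s A \<and> (\<forall>A'. q_positive s A' \<and> A \<subseteq> A' \<longrightarrow> A' = A)"

definition premax_q_positive :: "('b::real_vector \<Rightarrow> 'b \<Rightarrow> real) \<Rightarrow> 'b set \<Rightarrow> bool" where
  "premax_q_positive s P \<longleftrightarrow> q_positive s P \<and> (\<exists>!M. max_q_positive s M \<and> P \<subseteq> M)"

definition pi_set :: "('b::real_vector \<Rightarrow> 'b \<Rightarrow> real) \<Rightarrow> 'b set \<Rightarrow> 'b set" where
  "pi_set s A = {b. \<forall>a\<in>A. qform s (b - a) \<ge> 0}"

definition Phi :: "('b::real_vector \<Rightarrow> 'b \<Rightarrow> real) \<Rightarrow> 'b set \<Rightarrow> 'b \<Rightarrow> ereal" where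
  "Phi s A x = (SUP a\<in>A. ereal (s x a - qform s a))"

definition dom_Phi :: "('b::real_vector \<Rightarrow> 'b \<Rightarrow> real) \<Rightarrow> 'b set \<Rightarrow> 'b set" where
  "dom_Phi s A = {x. Phi s A x < \<infinity>}"

end

theory Submission
  imports Defs
begin

text \<open>Since P is premaximal, every element of P^\<pi> lies in the unique maximal extension
  of P, so P^\<pi> is itself q-positive. If \<Phi>_P(b0) < q(b0) for some b0, then
  q(a - b0) \<ge> \<delta> > 0 on P. Call a direction c dominated if
  \<lfloor>c, a - b0\<rfloor> \<le> L q(a - b0) on P for some L. Dominated directions form a convex cone,
  and b0 + \<epsilon>c \<in> P^\<pi> for small \<epsilon> > 0; so q-positivity of P^\<pi> yields
  q(c - d) \<ge> 0 for dominated c, d. Both P^\<pi> - b0 and dom \<Phi>_P - b0 consist of dominated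
  directions, and conversely every dominated c gives b0 + c \<in> P^\<pi>. Hence the cone is
  closed under differences, i.e. a linear subspace, and P^\<pi> = dom \<Phi>_P is its translate
  by b0.\<close>

locale sym_bilinear =
  fixes s :: "'b::real_vector \<Rightarrow> 'b \<Rightarrow> real"
  assumes bilinear: "bilinear s"
    and sym: "s x y = s y x"
begin

lemma qform_diff: "qform s (x - y) = qform s x - s x y + qform s y"
  unfolding qform_def
  by (simp add: bilinear_lsub[OF bilinear] bilinear_rsub[OF bilinear] sym[of y x] field_simps)

lemma qform_scaleR: "qform s (c *\<^sub>R x) = c\<^sup>2 * qform s x"
  unfolding qform_def
  by (simp add: bilinear_lmul[OF bilinear] bilinear_rmul[OF bilinear] power2_eq_square)

lemma qform_minus_commute: "qform s (x - y) = qform s (y - x)"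
  using qform_diff[of x y] qform_diff[of y x] sym[of x y] by simp

lemma qform_zero [simp]: "qform s 0 = 0"
  using qform_scaleR[of 0 0] by simp

end

lemma SSD_space_imp_sym_bilinear: "SSD_space s \<Longrightarrow> sym_bilinear s"
  unfolding SSD_space_def sym_bilinear_def bilinear_def by auto

lemma q_positive_extends_to_max_q_positive:
  assumes "q_positive s P"
  obtains M where "max_q_positive s M" "P \<subseteq> M"
proof -
  let ?A = "{X. q_positive s X \<and> P \<subseteq> X}"
  have "\<Union>C \<in> ?A" if "C \<noteq> {}" and chain: "subset.chain ?A C" for C
  proof -
    have sub: "C \<subseteq> ?A" and lin: "\<forall>X\<in>C. \<forall>Y\<in>C. X \<subseteq> Y \<or> Y \<subseteq> X"
      using chain unfolding subset_chain_def by blast+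
    obtain X where X: "X \<in> C" using \<open>C \<noteq> {}\<close> by blast
    have "qform s (b - c) \<ge> 0" if bc: "b \<in> \<Union>C" "c \<in> \<Union>C" for b c
    proof -
      obtain Y Z where YZ: "Y \<in> C" "Z \<in> C" "b \<in> Y" "c \<in> Z" using bc by blast
      then have "Y \<subseteq> Z \<or> Z \<subseteq> Y" using lin by blast
      then obtain W where "W \<in> C" "b \<in> W" "c \<in> W" using YZ by blast
      then show ?thesis using sub unfolding q_positive_def by blast
    qed
    moreover have "P \<subseteq> \<Union>C" "\<Union>C \<noteq> {}" using X sub assms unfolding q_positive_def by blast+
    ultimately show ?thesis unfolding q_positive_def by blast
  qed
  moreover have "?A \<noteq> {}" using assms by blast
  ultimately obtain M where M: "M \<in> ?A" "\<forall>X\<in>?A. M \<subseteq> X \<longrightarrow> X = M"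
    using subset_Zorn_nonempty[of ?A] by blast
  have "max_q_positive s M"
    unfolding max_q_positive_def
  proof (intro conjI allI impI)
    show "q_positive s M" using M(1) by simp
    fix A' assume "q_positive s A' \<and> M \<subseteq> A'"
    moreover have "P \<subseteq> M" using M(1) by simp
    ultimately show "A' = M" using M(2) by blast
  qed
  then show ?thesis using M(1) that by simp
qed

lemma q_positive_subset_pi_set: "q_positive s P \<Longrightarrow> P \<subseteq> pi_set s P"
  unfolding q_positive_def pi_set_def by auto

lemma dom_Phi_imp_bounded:
  assumes "x \<in> dom_Phi s A"
  obtains C where "\<And>a. a \<in> A \<Longrightarrow> s x a - qform s a \<le> C"
proof -
  obtain C where C: "Phi s A x < ereal C"
    using assms ereal_dense2[of "Phi s A x" \<infinity>] unfolding dom_Phi_def by auto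
  have "s x a - qform s a \<le> C" if "a \<in> A" for a
    using order.strict_trans1[OF SUP_upper[OF that] C[unfolded Phi_def]] by simp
  then show ?thesis using that by blast
qed

context sym_bilinear
begin

lemma pi_set_subset_dom_Phi: "pi_set s A \<subseteq> dom_Phi s A"
proof
  fix m assume m: "m \<in> pi_set s A"
  have "Phi s A m \<le> ereal (qform s m)"
    unfolding Phi_def
  proof (rule SUP_least)
    fix a assume "a \<in> A"
    then have "qform s (m - a) \<ge> 0" using m unfolding pi_set_def by simp
    then show "ereal (s m a - qform s a) \<le> ereal (qform s m)" by (simp add: qform_diff)
  qed
  then show "m \<in> dom_Phi s A" unfolding dom_Phi_def using le_less_trans by fastforce
qed

lemma Phi_less_qform_imp_separated:
  assumes "Phi s A b < ereal (qform s b)"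
  obtains \<delta> where "\<delta> > 0" "\<And>a. a \<in> A \<Longrightarrow> \<delta> \<le> qform s (a - b)"
proof -
  obtain r where r: "Phi s A b < ereal r" "r < qform s b"
    using ereal_dense2[OF assms] by auto
  have "qform s b - r \<le> qform s (a - b)" if "a \<in> A" for a
  proof -
    have "s b a - qform s a < r"
      using order.strict_trans1[OF SUP_upper[OF that] r(1)[unfolded Phi_def]] by simp
    moreover have "qform s (a - b) = qform s b - s b a + qform s a"
      using qform_diff[of b a] qform_minus_commute[of a b] by simp
    ultimately show ?thesis by linarith
  qed
  then show ?thesis using that[of "qform s b - r"] r(2) by simp
qed

lemma premax_imp_q_positive_pi_set:
  assumes "premax_q_positive s P"
  shows "q_positive s (pi_set s P)"
proof -
  obtain M where M: "max_q_positive s M" "P \<subseteq> M"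
    and uniq: "\<And>M'. max_q_positive s M' \<Longrightarrow> P \<subseteq> M' \<Longrightarrow> M' = M"
    using assms unfolding premax_q_positive_def by metis
  have P: "q_positive s P" using assms unfolding premax_q_positive_def by blast
  have "pi_set s P \<subseteq> M"
  proof
    fix m assume m: "m \<in> pi_set s P"
    then have "q_positive s (insert m P)"
      using P qform_minus_commute unfolding pi_set_def q_positive_def by auto
    then obtain M' where "max_q_positive s M'" "insert m P \<subseteq> M'"
      by (rule q_positive_extends_to_max_q_positive)
    then show "m \<in> M" using uniq[of M'] by blast
  qed
  moreover have "pi_set s P \<noteq> {}"
    using P q_positive_subset_pi_set unfolding q_positive_def by blast
  ultimately show ?thesis using M(1) unfolding max_q_positive_def q_positive_def by blast
qed

end

definition dominated_dirs :: "('b::real_vector \<Rightarrow> 'b \<Rightarrow> real) \<Rightarrow> 'b set \<Rightarrow> 'b \<Rightarrow> 'b set" where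
  "dominated_dirs s P b\<^sub>0 = {c. \<exists>L>0. \<forall>a\<in>P. s c (a - b\<^sub>0) \<le> L * qform s (a - b\<^sub>0)}"

locale q_separated = sym_bilinear s for s :: "'b::real_vector \<Rightarrow> 'b \<Rightarrow> real" +
  fixes P :: "'b set" and b\<^sub>0 :: 'b and \<delta> :: real
  assumes q_positive_P: "q_positive s P"
    and q_positive_pi_set: "q_positive s (pi_set s P)"
    and delta_pos: "\<delta> > 0"
    and separated: "a \<in> P \<Longrightarrow> \<delta> \<le> qform s (a - b\<^sub>0)"
begin

abbreviation D :: "'b set" where "D \<equiv> dominated_dirs s P b\<^sub>0"

lemma qform_P_nonneg: "a \<in> P \<Longrightarrow> 0 \<le> qform s (a - b\<^sub>0)"
  using separated delta_pos by fastforce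

lemma dominated_if_bounded:
  assumes K: "\<And>a. a \<in> P \<Longrightarrow> s c (a - b\<^sub>0) \<le> K + qform s (a - b\<^sub>0)"
  shows "c \<in> D"
proof -
  have "s c (a - b\<^sub>0) \<le> (\<bar>K\<bar> / \<delta> + 1) * qform s (a - b\<^sub>0)" if a: "a \<in> P" for a
  proof -
    have "\<bar>K\<bar> * 1 \<le> \<bar>K\<bar> * (qform s (a - b\<^sub>0) / \<delta>)"
      using separated[OF a] delta_pos by (intro mult_left_mono) auto
    then show ?thesis using K[OF a] by (simp add: distrib_right)
  qed
  moreover have "\<bar>K\<bar> / \<delta> + 1 > 0" using delta_pos by (simp add: add_nonneg_pos)
  ultimately show ?thesis unfolding dominated_dirs_def by blast
qed

lemma dominated_add:
  assumes "c \<in> D" "d \<in> D"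
  shows "c + d \<in> D"
proof -
  obtain L1 L2 where L: "L1 > 0" "L2 > 0"
    and c: "\<forall>a\<in>P. s c (a - b\<^sub>0) \<le> L1 * qform s (a - b\<^sub>0)"
    and d: "\<forall>a\<in>P. s d (a - b\<^sub>0) \<le> L2 * qform s (a - b\<^sub>0)"
    using assms unfolding dominated_dirs_def by blast
  have "s (c + d) (a - b\<^sub>0) \<le> (L1 + L2) * qform s (a - b\<^sub>0)" if "a \<in> P" for a
    using c d that by (simp add: bilinear_ladd[OF bilinear] distrib_right add_mono)
  moreover have "L1 + L2 > 0" using L by simp
  ultimately show ?thesis unfolding dominated_dirs_def by blast
qed

lemma dominated_scaleR_nonneg:
  assumes "c \<in> D" "t \<ge> 0"
  shows "t *\<^sub>R c \<in> D"
proof -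
  obtain L where L: "L > 0" "\<forall>a\<in>P. s c (a - b\<^sub>0) \<le> L * qform s (a - b\<^sub>0)"
    using assms(1) unfolding dominated_dirs_def by blast
  have "s (t *\<^sub>R c) (a - b\<^sub>0) \<le> (t * L + 1) * qform s (a - b\<^sub>0)" if a: "a \<in> P" for a
  proof -
    have "t * s c (a - b\<^sub>0) \<le> t * (L * qform s (a - b\<^sub>0))"
      using L a assms(2) by (intro mult_left_mono) auto
    then show ?thesis
      using qform_P_nonneg[OF a] by (simp add: bilinear_lmul[OF bilinear] distrib_right)
  qed
  moreover have "t * L + 1 > 0" using L assms(2) by (simp add: add_nonneg_pos)
  ultimately show ?thesis unfolding dominated_dirs_def by blast
qed

lemma small_step_in_pi_set:
  assumes L: "\<forall>a\<in>P. s c (a - b\<^sub>0) \<le> L * qform s (a - b\<^sub>0)"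
    and \<epsilon>: "\<epsilon> > 0" "\<epsilon> * L < 1/2" "- \<delta>/2 < \<epsilon>\<^sup>2 * qform s c"
  shows "b\<^sub>0 + \<epsilon> *\<^sub>R c \<in> pi_set s P"
  unfolding pi_set_def
proof (intro CollectI ballI)
  fix a assume a: "a \<in> P"
  have "\<epsilon> * s c (a - b\<^sub>0) \<le> (\<epsilon> * L) * qform s (a - b\<^sub>0)"
    using L a \<epsilon>(1) mult_left_mono[of _ _ \<epsilon>] by (simp add: mult.assoc)
  also have "\<dots> \<le> 1/2 * qform s (a - b\<^sub>0)"
    using \<epsilon>(2) qform_P_nonneg[OF a] by (intro mult_right_mono) auto
  finally have "\<epsilon> * s c (a - b\<^sub>0) \<le> 1/2 * qform s (a - b\<^sub>0)" .
  moreover have "b\<^sub>0 + \<epsilon> *\<^sub>R c - a = \<epsilon> *\<^sub>R c - (a - b\<^sub>0)" by (simp add: algebra_simps)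
  then have "qform s (b\<^sub>0 + \<epsilon> *\<^sub>R c - a) = \<epsilon>\<^sup>2 * qform s c - \<epsilon> * s c (a - b\<^sub>0) + qform s (a - b\<^sub>0)"
    by (simp only: qform_diff qform_scaleR bilinear_lmul[OF bilinear] real_scaleR_def)
  ultimately show "qform s (b\<^sub>0 + \<epsilon> *\<^sub>R c - a) \<ge> 0"
    using \<epsilon>(3) separated[OF a] by linarith
qed

lemma eventually_small_step_in_pi_set:
  assumes "c \<in> D"
  shows "\<forall>\<^sub>F \<epsilon> in at_right 0. b\<^sub>0 + \<epsilon> *\<^sub>R c \<in> pi_set s P"
proof -
  obtain L where L: "\<forall>a\<in>P. s c (a - b\<^sub>0) \<le> L * qform s (a - b\<^sub>0)"
    using assms unfolding dominated_dirs_def by blast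
  have "((\<lambda>\<epsilon>. \<epsilon> * L) \<longlongrightarrow> 0) (at_right 0)" "((\<lambda>\<epsilon>. \<epsilon>\<^sup>2 * qform s c) \<longlongrightarrow> 0) (at_right (0::real))"
    by (auto intro!: tendsto_eq_intros)
  then have "\<forall>\<^sub>F \<epsilon> in at_right 0. \<epsilon> * L < 1/2" "\<forall>\<^sub>F \<epsilon> in at_right 0. - \<delta>/2 < \<epsilon>\<^sup>2 * qform s c"
    using delta_pos by (auto dest: order_tendstoD(2)[of _ _ _ "1/2"] order_tendstoD(1)[of _ _ _ "- \<delta>/2"])
  with eventually_at_right_less[of 0] show ?thesis
    by eventually_elim (use L small_step_in_pi_set in blast)
qed

lemma qform_diff_dominated_nonneg:
  assumes "c \<in> D" "d \<in> D"
  shows "0 \<le> qform s (c - d)"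
proof -
  obtain \<epsilon> :: real where \<epsilon>: "\<epsilon> > 0" "b\<^sub>0 + \<epsilon> *\<^sub>R c \<in> pi_set s P" "b\<^sub>0 + \<epsilon> *\<^sub>R d \<in> pi_set s P"
    using eventually_happens'[OF trivial_limit_at_right_real eventually_conj[OF eventually_at_right_less
          eventually_conj[OF eventually_small_step_in_pi_set[OF assms(1)] eventually_small_step_in_pi_set[OF assms(2)]]]]
    by blast
  have "0 \<le> qform s ((b\<^sub>0 + \<epsilon> *\<^sub>R c) - (b\<^sub>0 + \<epsilon> *\<^sub>R d))"
    using q_positive_pi_set \<epsilon>(2,3) unfolding q_positive_def by blast
  also have "\<dots> = \<epsilon>\<^sup>2 * qform s (c - d)"
    by (simp add: qform_scaleR flip: scaleR_diff_right)
  finally show ?thesis using \<epsilon>(1) by (simp add: zero_le_mult_iff)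
qed

lemma pi_set_imp_dominated:
  assumes "m \<in> pi_set s P"
  shows "m - b\<^sub>0 \<in> D"
proof (rule dominated_if_bounded)
  fix a assume "a \<in> P"
  then have "0 \<le> qform s ((m - b\<^sub>0) - (a - b\<^sub>0))" using assms unfolding pi_set_def by simp
  then show "s (m - b\<^sub>0) (a - b\<^sub>0) \<le> qform s (m - b\<^sub>0) + qform s (a - b\<^sub>0)"
    unfolding qform_diff by simp
qed

lemma dom_Phi_imp_dominated:
  assumes "x \<in> dom_Phi s P"
  shows "x - b\<^sub>0 \<in> D"
proof -
  obtain C where C: "\<And>a. a \<in> P \<Longrightarrow> s x a - qform s a \<le> C"
    using dom_Phi_imp_bounded[OF assms] by blast
  show ?thesis
  proof (rule dominated_if_bounded)
    fix a assume a: "a \<in> P"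
    have "s (x - b\<^sub>0) (a - b\<^sub>0) = (s x a - qform s a) - s x b\<^sub>0 + qform s b\<^sub>0 + qform s (a - b\<^sub>0)"
      unfolding qform_def
      by (simp add: bilinear_lsub[OF bilinear] bilinear_rsub[OF bilinear] sym[of a b\<^sub>0] field_simps)
    then show "s (x - b\<^sub>0) (a - b\<^sub>0) \<le> (C - s x b\<^sub>0 + qform s b\<^sub>0) + qform s (a - b\<^sub>0)"
      using C[OF a] by linarith
  qed
qed

lemma dominated_imp_pi_set:
  assumes "x - b\<^sub>0 \<in> D"
  shows "x \<in> pi_set s P"
  unfolding pi_set_def
proof (intro CollectI ballI)
  fix a assume "a \<in> P"
  then have "a - b\<^sub>0 \<in> D"
    using pi_set_imp_dominated q_positive_subset_pi_set[OF q_positive_P] by blast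
  then have "0 \<le> qform s ((x - b\<^sub>0) - (a - b\<^sub>0))" using qform_diff_dominated_nonneg assms by blast
  then show "0 \<le> qform s (x - a)" by simp
qed

lemma dominated_diff:
  assumes "c \<in> D" "d \<in> D"
  shows "c - d \<in> D"
proof -
  have "b\<^sub>0 + (c - d) \<in> pi_set s P"
    unfolding pi_set_def
  proof (intro CollectI ballI)
    fix a assume "a \<in> P"
    then have "d + (a - b\<^sub>0) \<in> D"
      using assms(2) dominated_add pi_set_imp_dominated q_positive_subset_pi_set[OF q_positive_P]
      by blast
    then have "0 \<le> qform s (c - (d + (a - b\<^sub>0)))" using qform_diff_dominated_nonneg assms(1) by blast
    then show "0 \<le> qform s (b\<^sub>0 + (c - d) - a)" by (simp add: algebra_simps)
  qed
  then show ?thesis using pi_set_imp_dominated by fastforce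
qed

lemma zero_dominated: "0 \<in> D"
  unfolding dominated_dirs_def
  using qform_P_nonneg by (intro CollectI exI[of _ 1]) (simp add: bilinear_lzero[OF bilinear])

lemma subspace_dominated_dirs: "subspace D"
  unfolding subspace_def
proof (intro conjI ballI allI zero_dominated)
  fix c d assume c: "c \<in> D"
  fix t :: real
  show "t *\<^sub>R c \<in> D"
  proof (cases "t \<ge> 0")
    case False
    then have "0 - (- t) *\<^sub>R c \<in> D"
      using zero_dominated c by (intro dominated_diff dominated_scaleR_nonneg) auto
    then show ?thesis by simp
  qed (use c dominated_scaleR_nonneg in blast)
  assume "d \<in> D"
  then show "c + d \<in> D" using c dominated_add by blast
qed

lemma pi_set_eq_translated_dominated_dirs: "pi_set s P = (+) b\<^sub>0 ` D"
proof
  show "pi_set s P \<subseteq> (+) b\<^sub>0 ` D"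
    using pi_set_imp_dominated by (force simp: image_iff)
  show "(+) b\<^sub>0 ` D \<subseteq> pi_set s P"
    using dominated_imp_pi_set by auto
qed

lemma dom_Phi_eq_pi_set: "dom_Phi s P = pi_set s P"
  using pi_set_subset_dom_Phi dom_Phi_imp_dominated dominated_imp_pi_set by blast

lemma affine_pi_set: "affine (pi_set s P)"
  using subspace_imp_affine[OF subspace_dominated_dirs]
  unfolding pi_set_eq_translated_dominated_dirs by (simp flip: affine_translation)

end

theorem mainTheorem5:
  fixes s :: "'b::real_vector \<Rightarrow> 'b \<Rightarrow> real" and P :: "'b set"
  assumes "SSD_space s"
    and "premax_q_positive s P"
  shows "(\<forall>b. Phi s P b \<ge> ereal (qform s b))
         \<or> (pi_set s P = dom_Phi s P \<and> affine (pi_set s P))"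
proof (cases "\<forall>b. Phi s P b \<ge> ereal (qform s b)")
  case False
  then obtain b\<^sub>0 where b\<^sub>0: "Phi s P b\<^sub>0 < ereal (qform s b\<^sub>0)" by (auto simp: not_le)
  interpret sym_bilinear s using assms(1) by (rule SSD_space_imp_sym_bilinear)
  obtain \<delta> where "\<delta> > 0" "\<And>a. a \<in> P \<Longrightarrow> \<delta> \<le> qform s (a - b\<^sub>0)"
    using Phi_less_qform_imp_separated[OF b\<^sub>0] by blast
  then interpret q_separated s P b\<^sub>0 \<delta>
    using assms(2) premax_imp_q_positive_pi_set
    by unfold_locales (auto simp: premax_q_positive_def)
  show ?thesis using dom_Phi_eq_pi_set affine_pi_set by simp
qed simp

end
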